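(* Let $p$ be an odd prime. Then, modulo $p$, \[ (p-1)!!\equiv \operatorname{sf}(p-1)\equiv (-1)^{\frac{p-1}{2}}\, H(p-1) \pmod p. \]
   Context: For a natural number $n$, the double factorial $n!!$ is the product of the natural numbers less than or equal to $n$ that have the same parity as $n$. The superfactorial is $\operatorname{sf}(n)=\prod_{k=1}^{n} k!$. The hyperfactorial is $H(n)=\prod_{k=1}^{n} k^k$. *)

theory Defs
  imports "HOL-Number_Theory.Number_Theory"
begin

definition double_factorial :: "nat \<Rightarrow> nat" where
  "double_factorial n = (\<Prod>k \<in> {k \<in> {1..n}. even k = even n}. k)"

definition superfactorial :: "nat \<Rightarrow> nat" where
  "superfactorial n = (\<Prod>k = 1..n. fact k)"

definition hyperfactorial :: "nat \<Rightarrow> nat" where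
  "hyperfactorial n = (\<Prod>k = 1..n. k ^ k)"

end

theory Submission
  imports Defs
begin

text \<open>Write \<open>p = 2m + 1\<close> and pair each factor index \<open>j \<le> m\<close> with \<open>p - j \<equiv> -j\<close>. In \<open>(p - 1)!!\<close>
  exactly one of \<open>j, p - j\<close> is even, so the pair contributes \<open>(-1)^j j\<close>; in \<open>sf(p - 1) =
  \<Prod>\<^sub>j j^(p-j)\<close> the pair contributes \<open>j^(p-j) (-j)^j = (-1)^j j^p\<close>; in \<open>H(p - 1)\<close> it contributes
  \<open>j^j (-j)^(p-j) = -(-1)^j j^p\<close>. This proves \<open>sf(p - 1) \<equiv> (-1)^m H(p - 1)\<close> for every odd modulus,
  and Fermat's \<open>j^p \<equiv> j\<close> identifies the superfactorial with the double factorial.\<close>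

lemma prod_atLeastAtMost_double_pairs:
  fixes f :: "nat \<Rightarrow> 'a::comm_monoid_mult"
  shows "(\<Prod>j = 1..2*m. f j) = (\<Prod>j = 1..m. f j * f (2*m+1-j))"
proof -
  have "{1..2*m} = {1..m} \<union> {m+1..2*m}"
    by auto
  then have "(\<Prod>j = 1..2*m. f j) = (\<Prod>j = 1..m. f j) * (\<Prod>j = m+1..2*m. f j)"
    by (simp add: prod.union_disjoint)
  also have "(\<Prod>j = m+1..2*m. f j) = (\<Prod>j = 1..m. f (2*m+1-j))"
    by (rule prod.reindex_bij_witness[where i="\<lambda>j. 2*m+1-j" and j="\<lambda>j. 2*m+1-j"]) auto
  finally show ?thesis
    by (simp add: prod.distrib)
qed

lemma double_factorial_even:
  "double_factorial (2*m) = (\<Prod>j = 1..2*m. if even j then j else 1)"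
  unfolding double_factorial_def by (simp add: prod.inter_filter[symmetric])

lemma superfactorial_eq_prod_power:
  "superfactorial n = (\<Prod>j = 1..n. j ^ (n + 1 - j))"
proof (induction n)
  case 0
  then show ?case by (simp add: superfactorial_def)
next
  case (Suc n)
  have "superfactorial (Suc n) = (\<Prod>j = 1..n. j ^ (n + 1 - j)) * fact (Suc n)"
    using Suc by (simp add: superfactorial_def)
  also have "\<dots> = (\<Prod>j = 1..Suc n. j ^ (n + 1 - j) * j)"
    by (simp add: prod.distrib fact_prod prod.cl_ivl_Suc)
  also have "\<dots> = (\<Prod>j = 1..Suc n. j ^ (Suc n + 1 - j))"
    by (rule prod.cong) (auto simp: Suc_diff_le)
  finally show ?case .
qed

lemma cong_int_diff_neg:
  "j \<le> n \<Longrightarrow> [int (n - j) = - int j] (mod int n)"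
  by (simp add: cong_def of_nat_diff mod_simps)

lemma fermat_little_cong:
  fixes a p :: nat
  assumes "prime p"
  shows "[a ^ p = a] (mod p)"
proof (cases "p dvd a")
  case True
  then show ?thesis
    using prime_gt_0_nat[OF assms] by (simp add: cong_def) (meson dvd_imp_mod_0 dvd_power dvd_trans)
next
  case False
  have "[a ^ (p - 1) * a = 1 * a] (mod p)"
    using fermat_theorem[OF assms False] by (rule cong_mult[OF _ cong_refl])
  moreover have "a ^ (p - 1) * a = a ^ p"
    using prime_gt_0_nat[OF assms] by (simp add: power_Suc2[symmetric])
  ultimately show ?thesis
    by simp
qed

lemma double_factorial_cong_alternating:
  "[int (double_factorial (2*m)) = (\<Prod>j = 1..m. (-1) ^ j * int j)] (mod int (2*m+1))"
proof -
  have "int (double_factorial (2*m)) =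
      (\<Prod>j = 1..m. int (if even j then j else 1) * int (if even (2*m+1-j) then 2*m+1-j else 1))"
    unfolding double_factorial_even of_nat_prod by (rule prod_atLeastAtMost_double_pairs)
  also have "[\<dots> = (\<Prod>j = 1..m. (-1) ^ j * int j)] (mod int (2*m+1))"
  proof (rule cong_prod)
    fix j assume j: "j \<in> {1..m}"
    then have parity: "even (2*m+1-j) \<longleftrightarrow> odd j"
      by auto
    show "[int (if even j then j else 1) * int (if even (2*m+1-j) then 2*m+1-j else 1)
        = (-1) ^ j * int j] (mod int (2*m+1))"
      using cong_int_diff_neg[of j "2*m+1"] j by (simp add: parity)
  qed
  finally show ?thesis .
qed

lemma superfactorial_cong_alternating:
  "[int (superfactorial (2*m)) = (\<Prod>j = 1..m. (-1) ^ j * int j ^ (2*m+1))] (mod int (2*m+1))"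
proof -
  let ?n = "2*m+1"
  have "int (superfactorial (2*m)) = (\<Prod>j = 1..m. int j ^ (?n - j) * int (?n - j) ^ j)"
    unfolding superfactorial_eq_prod_power of_nat_prod
    by (subst prod_atLeastAtMost_double_pairs) (auto intro!: prod.cong)
  also have "[\<dots> = (\<Prod>j = 1..m. (-1) ^ j * int j ^ ?n)] (mod int ?n)"
  proof (rule cong_prod)
    fix j assume j: "j \<in> {1..m}"
    have "[int j ^ (?n - j) * int (?n - j) ^ j = int j ^ (?n - j) * (- int j) ^ j] (mod int ?n)"
      using j by (intro cong_mult cong_refl cong_pow cong_int_diff_neg) auto
    also have "int j ^ (?n - j) * (- int j) ^ j = (-1) ^ j * int j ^ (?n - j + j)"
      by (subst power_minus) (simp add: power_add ac_simps)
    finally show "[int j ^ (?n - j) * int (?n - j) ^ j = (-1) ^ j * int j ^ ?n] (mod int ?n)"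
      using j by simp
  qed
  finally show ?thesis .
qed

lemma hyperfactorial_cong_alternating:
  "[int (hyperfactorial (2*m)) = (-1) ^ m * (\<Prod>j = 1..m. (-1) ^ j * int j ^ (2*m+1))] (mod int (2*m+1))"
proof -
  let ?n = "2*m+1"
  have "int (hyperfactorial (2*m)) = (\<Prod>j = 1..m. int j ^ j * int (?n - j) ^ (?n - j))"
    unfolding hyperfactorial_def of_nat_prod of_nat_power by (rule prod_atLeastAtMost_double_pairs)
  also have "[\<dots> = (\<Prod>j = 1..m. - ((-1) ^ j * int j ^ ?n))] (mod int ?n)"
  proof (rule cong_prod)
    fix j assume j: "j \<in> {1..m}"
    have sign: "(-1::int) ^ (?n - j) = - ((-1) ^ j)"
      using j by (simp add: minus_one_power_iff)
    have "[int j ^ j * int (?n - j) ^ (?n - j) = int j ^ j * (- int j) ^ (?n - j)] (mod int ?n)"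
      using j by (intro cong_mult cong_refl cong_pow cong_int_diff_neg) auto
    also have "int j ^ j * (- int j) ^ (?n - j) = (-1) ^ (?n - j) * int j ^ (j + (?n - j))"
      by (subst power_minus) (simp add: power_add ac_simps)
    also have "\<dots> = - ((-1) ^ j * int j ^ ?n)"
      unfolding sign using j by simp
    finally show "[int j ^ j * int (?n - j) ^ (?n - j) = - ((-1) ^ j * int j ^ ?n)] (mod int ?n)" .
  qed
  also have "(\<Prod>j = 1..m. - ((-1::int) ^ j * int j ^ ?n)) = (-1) ^ m * (\<Prod>j = 1..m. (-1) ^ j * int j ^ ?n)"
    by (simp add: prod_uminus)
  finally show ?thesis .
qed

lemma superfactorial_cong_hyperfactorial:
  "[int (superfactorial (2*m)) = (-1) ^ m * int (hyperfactorial (2*m))] (mod int (2*m+1))"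
proof -
  let ?P = "\<Prod>j = 1..m. (-1) ^ j * int j ^ (2*m+1)"
  have "[(-1) ^ m * int (hyperfactorial (2*m)) = (-1) ^ m * ((-1) ^ m * ?P)] (mod int (2*m+1))"
    by (rule cong_scalar_left[OF hyperfactorial_cong_alternating])
  also have "(-1) ^ m * ((-1) ^ m * ?P) = ?P"
    by (simp add: mult.assoc[symmetric])
  finally show ?thesis
    using superfactorial_cong_alternating by (blast intro: cong_trans cong_sym)
qed

lemma double_factorial_cong_superfactorial:
  assumes "prime (2*m+1)"
  shows "[int (double_factorial (2*m)) = int (superfactorial (2*m))] (mod int (2*m+1))"
proof -
  have "[(\<Prod>j = 1..m. (-1) ^ j * int j) = (\<Prod>j = 1..m. (-1) ^ j * int j ^ (2*m+1))] (mod int (2*m+1))"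
  proof (rule cong_prod)
    fix j
    have "[int j ^ (2*m+1) = int j] (mod int (2*m+1))"
      using fermat_little_cong[OF assms, of j] unfolding of_nat_power[symmetric] cong_int_iff .
    then show "[(-1) ^ j * int j = (-1) ^ j * int j ^ (2*m+1)] (mod int (2*m+1))"
      by (intro cong_mult cong_refl) (rule cong_sym)
  qed
  then show ?thesis
    using double_factorial_cong_alternating superfactorial_cong_alternating
    by (blast intro: cong_trans cong_sym)
qed

theorem theorem2:
  fixes p :: nat
  assumes "prime p" and "odd p"
  shows "[int (double_factorial (p - 1)) = int (superfactorial (p - 1))] (mod int p)
       \<and> [int (superfactorial (p - 1)) = (-1) ^ ((p - 1) div 2) * int (hyperfactorial (p - 1))] (mod int p)"
proof -
  obtain m where p: "p = 2*m+1"
    using assms(2) by (rule oddE)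
  then have "p - 1 = 2*m" "(p - 1) div 2 = m"
    by auto
  then show ?thesis
    using double_factorial_cong_superfactorial[of m] superfactorial_cong_hyperfactorial[of m]
      assms(1) p by simp
qed

end
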